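(* Let $0<q<1$, $M\in\mathbb{N}$, $r=q^{-M}$, and let $a,b,c,d,f,g,v,w$ be complex parameters with $\max\{|ac|,|ad|,|bc|,|bd|,|q/(bc)|\}<1$. Then \begin{align*} &\int_c^d\frac{\left(\frac{qt}{c},\frac{qt}{d};q\right)_\infty}{(at,bt;q)_\infty}\sum_{k=0}^\infty\frac{\left(r,f,g,\frac{c}{t},abcd;q\right)_k\left(\frac{qt}{bcd}\right)^k}{(v,w,ac,q;q)_k}\;{}_3\Phi_2\left[\begin{matrix}rq^k,fq^k,gq^k;\\ vq^k,wq^k;\end{matrix}\;q;\,q\right]{\rm d}_qt\\ &\qquad=\frac{d(1-q)\left(q,\frac{dq}{c},\frac{c}{d},abcd;q\right)_\infty}{(ac,ad,bc,bd;q)_\infty}\;{}_3\Phi_2\left[\begin{matrix}r,f,g;\\ v,w;\end{matrix}\;q;\,\frac{q}{bc}\right]. \end{align*}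
   Context: Throughout $0<q<1$. For complex $\alpha$: $(\alpha;q)_0=1$, $(\alpha;q)_n=\prod_{k=0}^{n-1}(1-\alpha q^k)$, $(\alpha;q)_\infty=\prod_{k=0}^\infty(1-\alpha q^k)$, and $(\alpha_1,\dots,\alpha_m;q)_n=(\alpha_1;q)_n\cdots(\alpha_m;q)_n$ (also for $n=\infty$). ${}_{3}\Phi_{2}\left[\begin{matrix}a_1,a_2,a_3;\\ b_1,b_2;\end{matrix}\,q;z\right]=\sum_{n=0}^\infty\frac{(a_1,a_2,a_3;q)_n}{(b_1,b_2;q)_n}\frac{z^n}{(q;q)_n}$. The $q$-integral (Jackson integral) is $\int_0^x F(t)\,{\rm d}_qt=x(1-q)\sum_{n=0}^\infty F(xq^n)q^n$ and $\int_c^dF(t)\,{\rm d}_qt=\int_0^dF(t)\,{\rm d}_qt-\int_0^cF(t)\,{\rm d}_qt$. *)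

theory Defs
  imports "HOL-Analysis.Analysis"
begin

definition qpoch :: "complex \<Rightarrow> real \<Rightarrow> nat \<Rightarrow> complex" where
  "qpoch \<alpha> q n = (\<Prod>k<n. 1 - \<alpha> * of_real (q ^ k))"

definition qpoch_inf :: "complex \<Rightarrow> real \<Rightarrow> complex" where
  "qpoch_inf \<alpha> q = lim (\<lambda>n. qpoch \<alpha> q n)"

definition phi32 :: "complex \<Rightarrow> complex \<Rightarrow> complex \<Rightarrow> complex \<Rightarrow> complex \<Rightarrow> real \<Rightarrow> complex \<Rightarrow> complex" where
  "phi32 a1 a2 a3 b1 b2 q z =
     (\<Sum>n. qpoch a1 q n * qpoch a2 q n * qpoch a3 q n
           / (qpoch b1 q n * qpoch b2 q n * qpoch (of_real q) q n) * z ^ n)"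

definition jackson0 :: "(complex \<Rightarrow> complex) \<Rightarrow> real \<Rightarrow> complex \<Rightarrow> complex" where
  "jackson0 F q x = x * of_real (1 - q) * (\<Sum>n. F (x * of_real (q ^ n)) * of_real (q ^ n))"

definition jackson :: "(complex \<Rightarrow> complex) \<Rightarrow> real \<Rightarrow> complex \<Rightarrow> complex \<Rightarrow> complex" where
  "jackson F q c d = jackson0 F q d - jackson0 F q c"

end

(* The k-series in the integrand terminates, because (q^-M; q)_k = 0 for k > M, so on the
   lattice points of the Jackson integral the integrand is a finite combination of
   w(t) (t - c)(t - c q)...(t - c q^(k-1)), with w the Andrews-Askey weight
   (qt/c, qt/d; q)_oo / (at, bt; q)_oo.  Integrating the q-derivative of an explicit function
   that vanishes at c and d gives a first-order recurrence for these moments m_k, hence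
   m_k = m_0 d^k (ac, bc; q)_k / (abcd; q)_k.  Letting k -> oo in m_k / d^k directly, only the
   lattice point t = d survives (by Tannery's theorem), which evaluates m_0, the Andrews-Askey
   integral.  The remaining double sum collapses to the 3Phi2 on the right by the terminating
   q-binomial theorem. *)

theory Submission
  imports Defs
begin

section \<open>\<open>q\<close>-shifted factorials\<close>

lemma qpoch_0 [simp]: "qpoch x q 0 = 1"
  by (simp add: qpoch_def)

lemma qpoch_Suc: "qpoch x q (Suc n) = qpoch x q n * (1 - x * of_real (q ^ n))"
  by (simp add: qpoch_def)

lemma qpoch_Suc': "qpoch x q (Suc n) = (1 - x) * qpoch (x * of_real q) q n"
  unfolding qpoch_def by (subst prod.lessThan_Suc_shift) (simp add: mult.assoc)

lemma qpoch_add: "qpoch x q (m + n) = qpoch x q m * qpoch (x * of_real (q ^ m)) q n"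
  by (induction n) (simp_all add: qpoch_Suc power_add mult_ac)

lemma qpoch_nonzero: "(\<And>i. x * of_real (q ^ i) \<noteq> 1) \<Longrightarrow> qpoch x q n \<noteq> 0"
  by (simp add: qpoch_def)

lemma qpoch_div_mult_power:
  assumes "t \<noteq> 0"
  shows "qpoch (c / t) q k * t ^ k = (\<Prod>j<k. t - c * of_real (q ^ j))"
proof -
  have "qpoch (c / t) q k * t ^ k = (\<Prod>j<k. (1 - c / t * of_real (q ^ j)) * t)"
    by (simp add: qpoch_def prod.distrib)
  also have "\<dots> = (\<Prod>j<k. t - c * of_real (q ^ j))"
    using assms by (intro prod.cong refl) (simp add: field_simps)
  finally show ?thesis .
qed

lemma qpoch_terminating:
  assumes "r * of_real (q ^ M) = 1" "k \<le> M" "M < k + n"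
  shows "qpoch (r * of_real (q ^ k)) q n = 0"
proof -
  have "r * of_real (q ^ k) * of_real (q ^ (M - k)) = 1"
    using assms(1,2) by (simp add: mult.assoc flip: power_add)
  then show ?thesis
    using assms(2,3) unfolding qpoch_def by (intro prod_zero bexI[of _ "M - k"]) auto
qed

lemma mult_power_int_neg_eq_1:
  assumes "q \<noteq> 0"
  shows "of_real (q powi (- int M)) * of_real (q ^ M) = (1 :: complex)"
  using assms by (simp add: power_int_minus flip: of_real_mult)

locale q_base =
  fixes q :: real
  assumes q_pos: "0 < q" and q_less_1: "q < 1"
begin

lemma mult_power_neq_1: "norm x < 1 \<Longrightarrow> x * of_real (q ^ i) \<noteq> (1 :: complex)"
proof
  assume small: "norm x < 1" and eq: "x * of_real (q ^ i) = 1"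
  have "q ^ i \<le> 1"
    using q_pos q_less_1 by (simp add: power_le_one)
  then have "norm (x * of_real (q ^ i)) \<le> norm x"
    using q_pos by (simp add: norm_mult norm_power mult_left_le)
  with small eq show False
    by simp
qed

lemma qpoch_nonzero_if_small: "norm x < 1 \<Longrightarrow> qpoch x q n \<noteq> 0"
  by (intro qpoch_nonzero mult_power_neq_1)

lemma qpoch_q_nonzero: "qpoch (of_real q) q n \<noteq> 0"
  using q_pos q_less_1 by (intro qpoch_nonzero_if_small) simp

lemma convergent_prod_qpoch: "convergent_prod (\<lambda>i. 1 - x * of_real (q ^ i) :: complex)"
proof -
  have "summable (\<lambda>i. norm ((1 - x * of_real (q ^ i)) - 1))"
    using q_pos q_less_1 by (simp add: norm_mult norm_power summable_geometric)
  then show ?thesis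
    by (intro abs_convergent_prod_imp_convergent_prod summable_imp_abs_convergent_prod)
qed

lemma LIMSEQ_qpoch_prodinf: "(\<lambda>n. qpoch x q n) \<longlonglongrightarrow> prodinf (\<lambda>i. 1 - x * of_real (q ^ i))"
proof -
  have "(\<lambda>n. qpoch x q (Suc n)) \<longlonglongrightarrow> prodinf (\<lambda>i. 1 - x * of_real (q ^ i))"
    using convergent_prod_LIMSEQ[OF convergent_prod_qpoch]
    by (simp add: qpoch_def lessThan_Suc_atMost)
  then show ?thesis by (rule LIMSEQ_imp_Suc)
qed

lemma qpoch_inf_eq_prodinf: "qpoch_inf x q = prodinf (\<lambda>i. 1 - x * of_real (q ^ i))"
  unfolding qpoch_inf_def using LIMSEQ_qpoch_prodinf by (rule limI)

lemma LIMSEQ_qpoch: "(\<lambda>n. qpoch x q n) \<longlonglongrightarrow> qpoch_inf x q"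
  unfolding qpoch_inf_eq_prodinf by (rule LIMSEQ_qpoch_prodinf)

lemma qpoch_inf_nonzero: "(\<And>i. x * of_real (q ^ i) \<noteq> 1) \<Longrightarrow> qpoch_inf x q \<noteq> 0"
  unfolding qpoch_inf_eq_prodinf by (rule prodinf_nonzero[OF convergent_prod_qpoch]) auto

lemma qpoch_inf_nonzero_if_small: "norm x < 1 \<Longrightarrow> qpoch_inf x q \<noteq> 0"
  by (intro qpoch_inf_nonzero mult_power_neq_1)

lemma qpoch_inf_0 [simp]: "qpoch_inf 0 q = 1"
  using LIMSEQ_qpoch[of 0] by (simp add: qpoch_def LIMSEQ_const_iff)

lemma qpoch_inf_unfold: "qpoch_inf x q = (1 - x) * qpoch_inf (x * of_real q) q"
proof (rule LIMSEQ_unique)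
  show "(\<lambda>n. qpoch x q (Suc n)) \<longlonglongrightarrow> qpoch_inf x q"
    using LIMSEQ_qpoch by (rule LIMSEQ_Suc)
  show "(\<lambda>n. qpoch x q (Suc n)) \<longlonglongrightarrow> (1 - x) * qpoch_inf (x * of_real q) q"
    unfolding qpoch_Suc' by (intro tendsto_mult tendsto_const LIMSEQ_qpoch)
qed

lemma qpoch_inf_1 [simp]: "qpoch_inf 1 q = 0"
  using qpoch_inf_unfold[of 1] by simp

lemma qpoch_inf_eq_qpoch_mult: "qpoch_inf x q = qpoch x q n * qpoch_inf (x * of_real (q ^ n)) q"
proof (induction n)
  case (Suc n)
  have "qpoch_inf (x * of_real (q ^ n)) q
      = (1 - x * of_real (q ^ n)) * qpoch_inf (x * of_real (q ^ Suc n)) q"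
    by (subst qpoch_inf_unfold) (simp add: mult_ac)
  with Suc show ?case by (simp add: qpoch_Suc mult.assoc)
qed simp

text \<open>Choose \<open>N\<close> with \<open>|y q^N| < 1\<close>, so that no factor of \<open>(z; q)\<^sub>\<infinity>\<close>, \<open>z = y q^N\<close>, vanishes;
  then \<open>(y q^(n+N); q)\<^sub>\<infinity> = (z; q)\<^sub>\<infinity> / (z; q)\<^sub>n \<longrightarrow> 1\<close>.\<close>
lemma tendsto_qpoch_inf_1: "(\<lambda>n. qpoch_inf (y * of_real (q ^ n)) q) \<longlonglongrightarrow> 1"
proof -
  have "(\<lambda>n. norm y * q ^ n) \<longlonglongrightarrow> 0"
    using q_pos q_less_1 by (intro tendsto_mult_right_zero LIMSEQ_power_zero) auto
  then have "eventually (\<lambda>n. norm y * q ^ n < 1) sequentially"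
    by (rule order_tendstoD) simp
  then obtain N where "norm y * q ^ N < 1"
    unfolding eventually_sequentially by blast
  define z where "z = y * of_real (q ^ N)"
  have "norm z < 1"
    using \<open>norm y * q ^ N < 1\<close> q_pos by (simp add: z_def norm_mult norm_power)
  then have nz: "qpoch_inf z q \<noteq> 0" "\<And>n. qpoch z q n \<noteq> 0"
    by (simp_all add: qpoch_inf_nonzero_if_small qpoch_nonzero_if_small)
  have "qpoch_inf (y * of_real (q ^ (n + N))) q = qpoch_inf z q / qpoch z q n" for n
    using qpoch_inf_eq_qpoch_mult[of z n] nz(2)[of n]
    by (simp add: z_def power_add field_simps mult_ac)
  moreover have "(\<lambda>n. qpoch_inf z q / qpoch z q n) \<longlonglongrightarrow> qpoch_inf z q / qpoch_inf z q"
    by (intro tendsto_divide tendsto_const LIMSEQ_qpoch nz)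
  ultimately have "(\<lambda>n. qpoch_inf (y * of_real (q ^ (n + N))) q) \<longlonglongrightarrow> 1"
    using nz by simp
  then show ?thesis by (rule LIMSEQ_offset)
qed

lemma tendsto_qpoch_inf_1':
  "(\<And>n. z n = y * of_real (q ^ n)) \<Longrightarrow> (\<lambda>n. qpoch_inf (z n) q) \<longlonglongrightarrow> 1"
  using tendsto_qpoch_inf_1[of y] by simp

lemma tendsto_lattice_0: "(\<lambda>n. x * of_real (q ^ n)) \<longlonglongrightarrow> (0 :: complex)"
proof -
  have "(\<lambda>n. of_real (q ^ n) :: complex) \<longlonglongrightarrow> of_real 0"
    using q_pos q_less_1 by (intro tendsto_of_real LIMSEQ_power_zero) auto
  then show ?thesis
    by (intro tendsto_mult_right_zero) simp
qed

end

section \<open>Terminating basic hypergeometric series\<close>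

lemma phi32_terminating:
  assumes "\<And>n. N < n \<Longrightarrow> qpoch a1 q n = 0"
  shows "phi32 a1 a2 a3 b1 b2 q z = (\<Sum>n\<le>N. qpoch a1 q n * qpoch a2 q n * qpoch a3 q n
           / (qpoch b1 q n * qpoch b2 q n * qpoch (of_real q) q n) * z ^ n)"
  unfolding phi32_def by (rule suminf_finite) (use assms in auto)

context q_base
begin

abbreviation qfac :: "nat \<Rightarrow> complex" where
  "qfac n \<equiv> qpoch (of_real q) q n"

lemma q_binomial_sum:
  "(\<Sum>k\<le>N. qpoch u q k * u ^ (N - k) / (qfac k * qfac (N - k))) = 1 / qfac N"
proof (induction N arbitrary: u)
  case (Suc N)
  have nz: "qfac n \<noteq> 0" for n
    by (rule qpoch_q_nonzero)
  have nz_Suc: "1 - of_real q * of_real q ^ m \<noteq> (0 :: complex)" for m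
    using mult_power_neq_1[of "of_real q" m] q_pos q_less_1 by auto
  define f where "f j = qpoch u q j * u ^ (Suc N - j) / (qfac j * qfac (Suc N - j))" for j
  \<comment> \<open>Split \<open>1 - q^(N+1) = (1 - q^(N+1-j)) + q^(N+1-j) (1 - q^j)\<close>: the first part shortens
     \<open>qfac (N + 1 - j)\<close>, the second shortens \<open>qfac j\<close> and turns \<open>u\<close> into \<open>u q\<close>.\<close>
  have split: "(1 - of_real q ^ Suc N) * f j
      = f j * (1 - of_real q ^ (Suc N - j)) + f j * of_real q ^ (Suc N - j) * (1 - of_real q ^ j)"
    if "j \<le> Suc N" for j
  proof -
    have "of_real q ^ (Suc N - j) * of_real q ^ j = (of_real q ^ Suc N :: complex)"
      using that by (simp flip: power_add)
    then show ?thesis by (simp add: algebra_simps)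
  qed
  have first: "(\<Sum>j\<le>Suc N. f j * (1 - of_real q ^ (Suc N - j))) = u * (1 / qfac N)"
  proof -
    have "f j * (1 - of_real q ^ (Suc N - j))
        = u * (qpoch u q j * u ^ (N - j) / (qfac j * qfac (N - j)))" if "j \<le> N" for j
    proof -
      from that have "Suc N - j = Suc (N - j)" by auto
      then show ?thesis
        unfolding f_def using nz[of j] nz[of "N - j"] nz_Suc[of "N - j"]
        by (simp add: qpoch_Suc field_simps)
    qed
    then have "(\<Sum>j\<le>Suc N. f j * (1 - of_real q ^ (Suc N - j)))
        = u * (\<Sum>j\<le>N. qpoch u q j * u ^ (N - j) / (qfac j * qfac (N - j)))"
      by (simp add: sum.atMost_Suc sum_distrib_left)
    then show ?thesis by (simp only: Suc.IH)
  qed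
  have second: "(\<Sum>j\<le>Suc N. f j * of_real q ^ (Suc N - j) * (1 - of_real q ^ j))
      = (1 - u) * (1 / qfac N)"
  proof -
    have "f (Suc i) * of_real q ^ (Suc N - Suc i) * (1 - of_real q ^ Suc i)
        = (1 - u) * (qpoch (u * of_real q) q i * (u * of_real q) ^ (N - i)
                     / (qfac i * qfac (N - i)))"
      for i
      unfolding f_def using nz[of i] nz[of "N - i"] nz_Suc[of i]
      by (simp add: qpoch_Suc'[of u] qpoch_Suc[of "of_real q" q i] field_simps power_mult_distrib)
    then have "(\<Sum>j\<le>Suc N. f j * of_real q ^ (Suc N - j) * (1 - of_real q ^ j))
        = (1 - u) * (\<Sum>i\<le>N. qpoch (u * of_real q) q i * (u * of_real q) ^ (N - i)
                                / (qfac i * qfac (N - i)))"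
      unfolding sum.atMost_Suc_shift by (simp add: sum_distrib_left)
    then show ?thesis by (simp only: Suc.IH)
  qed
  have "(1 - of_real q ^ Suc N) * (\<Sum>j\<le>Suc N. f j)
      = (\<Sum>j\<le>Suc N. f j * (1 - of_real q ^ (Suc N - j))
                      + f j * of_real q ^ (Suc N - j) * (1 - of_real q ^ j))"
    unfolding sum_distrib_left by (intro sum.cong refl split) auto
  also have "\<dots> = u * (1 / qfac N) + (1 - u) * (1 / qfac N)"
    by (simp only: sum.distrib first second)
  also have "\<dots> = 1 / qfac N"
    by (simp flip: add_divide_distrib)
  finally have "(1 - of_real q ^ Suc N) * (\<Sum>j\<le>Suc N. f j) = 1 / qfac N" .
  moreover have "1 - of_real q ^ Suc N \<noteq> (0 :: complex)"
    using nz_Suc[of N] by simp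
  ultimately have "(\<Sum>j\<le>Suc N. f j) = 1 / qfac N / (1 - of_real q ^ Suc N)"
    by (metis nonzero_mult_div_cancel_left)
  then show ?case
    by (simp add: f_def qpoch_Suc)
qed simp

lemma q_binomial_sum_scaled:
  assumes "u * z = of_real q"
  shows "(\<Sum>k\<le>N. qpoch u q k * z ^ k * of_real q ^ (N - k) / (qfac k * qfac (N - k)))
         = z ^ N / qfac N"
proof -
  have "qpoch u q k * z ^ k * of_real q ^ (N - k) / (qfac k * qfac (N - k))
      = z ^ N * (qpoch u q k * u ^ (N - k) / (qfac k * qfac (N - k)))" if "k \<le> N" for k
  proof -
    have "z ^ k * of_real q ^ (N - k) = z ^ (k + (N - k)) * u ^ (N - k)"
      by (simp flip: assms add: power_add power_mult_distrib)
    with that show ?thesis by simp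
  qed
  then have "(\<Sum>k\<le>N. qpoch u q k * z ^ k * of_real q ^ (N - k) / (qfac k * qfac (N - k)))
      = z ^ N * (\<Sum>k\<le>N. qpoch u q k * u ^ (N - k) / (qfac k * qfac (N - k)))"
    unfolding sum_distrib_left by (intro sum.cong) auto
  then show ?thesis
    by (simp add: q_binomial_sum)
qed

lemma q_binomial_convolution:
  assumes "u * z = of_real q"
  shows "(\<Sum>k\<le>M. qpoch u q k * z ^ k / qfac k * (\<Sum>n\<le>M - k. V (k + n) * of_real q ^ n / qfac n))
         = (\<Sum>N\<le>M. V N * z ^ N / qfac N)"
proof -
  define X where "X k n = V (k + n) * (qpoch u q k * z ^ k * of_real q ^ n / (qfac k * qfac n))"
    for k n
  have "(\<Sum>k\<le>M. qpoch u q k * z ^ k / qfac k * (\<Sum>n\<le>M - k. V (k + n) * of_real q ^ n / qfac n))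
      = (\<Sum>k\<le>M. \<Sum>n\<le>M - k. X k n)"
    by (simp add: X_def sum_distrib_left mult_ac)
  also have "\<dots> = (\<Sum>(k, n)\<in>{(k, n). k + n \<le> M}. X k n)"
    by (subst sum.Sigma) (auto intro!: sum.cong)
  also have "\<dots> = (\<Sum>N\<le>M. \<Sum>k\<le>N. X k (N - k))"
    by (rule sum.triangle_reindex_eq)
  also have "\<dots> = (\<Sum>N\<le>M. V N * z ^ N / qfac N)"
  proof (rule sum.cong[OF refl])
    fix N
    have "(\<Sum>k\<le>N. X k (N - k))
        = V N * (\<Sum>k\<le>N. qpoch u q k * z ^ k * of_real q ^ (N - k) / (qfac k * qfac (N - k)))"
      unfolding X_def sum_distrib_left by (intro sum.cong) auto
    then show "(\<Sum>k\<le>N. X k (N - k)) = V N * z ^ N / qfac N"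
      by (simp add: q_binomial_sum_scaled[OF assms])
  qed
  finally show ?thesis .
qed

lemma phi32_expansion:
  assumes "r * of_real (q ^ M) = 1" "u * z = of_real q"
  shows "(\<Sum>k\<le>M. qpoch r q k * qpoch f q k * qpoch g q k * qpoch u q k * z ^ k
              / (qpoch v q k * qpoch w q k * qfac k)
           * phi32 (r * of_real (q ^ k)) (f * of_real (q ^ k)) (g * of_real (q ^ k))
                   (v * of_real (q ^ k)) (w * of_real (q ^ k)) q (of_real q))
         = phi32 r f g v w q z"
proof -
  define V where "V N = qpoch r q N * qpoch f q N * qpoch g q N / (qpoch v q N * qpoch w q N)" for N
  have summand: "qpoch r q k * qpoch f q k * qpoch g q k * qpoch u q k * z ^ k
              / (qpoch v q k * qpoch w q k * qfac k)
           * phi32 (r * of_real (q ^ k)) (f * of_real (q ^ k)) (g * of_real (q ^ k))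
                   (v * of_real (q ^ k)) (w * of_real (q ^ k)) q (of_real q)
      = qpoch u q k * z ^ k / qfac k * (\<Sum>n\<le>M - k. V (k + n) * of_real q ^ n / qfac n)"
    if "k \<le> M" for k
    using qpoch_terminating[OF assms(1) that]
    by (subst phi32_terminating[of "M - k"])
      (auto simp: V_def qpoch_add sum_distrib_left divide_inverse mult_ac intro!: sum.cong)
  have "(\<Sum>k\<le>M. qpoch r q k * qpoch f q k * qpoch g q k * qpoch u q k * z ^ k
              / (qpoch v q k * qpoch w q k * qfac k)
           * phi32 (r * of_real (q ^ k)) (f * of_real (q ^ k)) (g * of_real (q ^ k))
                   (v * of_real (q ^ k)) (w * of_real (q ^ k)) q (of_real q))
      = (\<Sum>N\<le>M. V N * z ^ N / qfac N)"
    unfolding q_binomial_convolution[OF assms(2), symmetric]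
    by (rule sum.cong[OF refl], rule summand) simp
  also have "\<dots> = phi32 r f g v w q z"
    using qpoch_terminating[OF assms(1), of 0]
    by (subst phi32_terminating[of M]) (auto simp: V_def intro!: sum.cong)
  finally show ?thesis .
qed

end

section \<open>Jackson integrals and dominated limits\<close>

lemma jackson0_cong:
  "(\<And>n. F (x * of_real (q ^ n)) = G (x * of_real (q ^ n))) \<Longrightarrow> jackson0 F q x = jackson0 G q x"
  by (simp add: jackson0_def)

lemma jackson0_diff:
  assumes "summable (\<lambda>n. F (x * of_real (q ^ n)) * of_real (q ^ n))"
    and "summable (\<lambda>n. G (x * of_real (q ^ n)) * of_real (q ^ n))"
  shows "jackson0 (\<lambda>t. F t - G t) q x = jackson0 F q x - jackson0 G q x"
  unfolding jackson0_def using suminf_diff[OF assms] by (simp add: algebra_simps)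

lemma jackson0_cmult:
  assumes "summable (\<lambda>n. F (x * of_real (q ^ n)) * of_real (q ^ n))"
  shows "jackson0 (\<lambda>t. A * F t) q x = A * jackson0 F q x"
  unfolding jackson0_def using suminf_mult[OF assms, of A] by (simp add: mult_ac)

lemma jackson0_sum:
  assumes "\<And>k. k \<in> K \<Longrightarrow> summable (\<lambda>n. F k (x * of_real (q ^ n)) * of_real (q ^ n))"
  shows "jackson0 (\<lambda>t. \<Sum>k\<in>K. F k t) q x = (\<Sum>k\<in>K. jackson0 (F k) q x)"
proof -
  have "(\<Sum>n. \<Sum>k\<in>K. F k (x * of_real (q ^ n)) * of_real (q ^ n))
      = (\<Sum>k\<in>K. \<Sum>n. F k (x * of_real (q ^ n)) * of_real (q ^ n))"
    by (rule suminf_sum) (rule assms)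
  then show ?thesis
    unfolding jackson0_def by (simp add: sum_distrib_left sum_distrib_right)
qed

lemma jackson0_q_difference:
  assumes "x \<noteq> 0" "q \<noteq> 0" "(\<lambda>n. G (x * of_real (q ^ n))) \<longlonglongrightarrow> L"
  shows "jackson0 (\<lambda>t. (G t - G (of_real q * t)) / t) q x = of_real (1 - q) * (G x - L)"
proof -
  have "(\<lambda>n. G (x * of_real (q ^ n)) - G (x * of_real (q ^ Suc n))) sums (G x - L)"
    using telescope_sums'[OF assms(3)] by simp
  then have "(\<lambda>n. (G (x * of_real (q ^ n)) - G (x * of_real (q ^ Suc n))) / x) sums ((G x - L) / x)"
    by (rule sums_divide)
  moreover have "(G (x * of_real (q ^ n)) - G (of_real q * (x * of_real (q ^ n))))
      / (x * of_real (q ^ n)) * of_real (q ^ n)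
      = (G (x * of_real (q ^ n)) - G (x * of_real (q ^ Suc n))) / x" for n
    using assms(2) by (simp add: mult_ac)
  ultimately have "(\<lambda>n. (G (x * of_real (q ^ n)) - G (of_real q * (x * of_real (q ^ n))))
                  / (x * of_real (q ^ n)) * of_real (q ^ n)) sums ((G x - L) / x)"
    by simp
  then show ?thesis
    using assms(1) unfolding jackson0_def by (simp add: sums_iff)
qed

context q_base
begin

lemma summable_convergent_mult_power:
  assumes "convergent (X :: nat \<Rightarrow> complex)"
  shows "summable (\<lambda>n. X n * of_real (q ^ n))"
proof -
  obtain B where "\<And>n. norm (X n) \<le> B"
    using convergent_imp_Bseq[OF assms] by (auto simp: Bseq_def)
  then have bound: "norm (X n * of_real (q ^ n)) \<le> B * q ^ n" for n
    using q_pos by (simp add: norm_mult norm_power mult_right_mono)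
  have "summable (\<lambda>n. B * q ^ n)"
    using q_pos q_less_1 by (intro summable_mult summable_geometric) auto
  then show ?thesis
    using bound by (rule summable_comparison_test')
qed

lemma tannery_geometric:
  fixes T :: "nat \<Rightarrow> nat \<Rightarrow> complex"
  assumes "Bseq w" "\<And>n k. N \<le> n \<Longrightarrow> norm (T n k) \<le> C" "\<And>n. (\<lambda>k. T n k) \<longlonglongrightarrow> L n"
  shows "(\<lambda>k. \<Sum>n. w n * T n k * of_real (q ^ n)) \<longlonglongrightarrow> (\<Sum>n. w n * L n * of_real (q ^ n))"
proof -
  obtain B where B: "B > 0" "\<And>n. norm (w n) \<le> B"
    using assms(1) by (auto simp: Bseq_def)
  have "\<forall>\<^sub>F (n, k) in sequentially \<times>\<^sub>F sequentially.
          norm (w n * T n k * of_real (q ^ n)) \<le> B * C * q ^ n"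
    unfolding eventually_prod_sequentially
  proof (intro exI[of _ N] allI impI)
    fix k n assume "N \<le> k" "N \<le> n"
    then show "case (n, k) of (n, k) \<Rightarrow> norm (w n * T n k * of_real (q ^ n)) \<le> B * C * q ^ n"
      using B(1) B(2)[of n] assms(2)[of n k] q_pos
      by (auto simp: norm_mult norm_power intro!: mult_right_mono mult_mono)
  qed
  moreover have "summable (\<lambda>n. B * C * q ^ n)"
    using q_pos q_less_1 by (intro summable_mult summable_geometric) auto
  moreover have "(\<lambda>k. w n * T n k * of_real (q ^ n)) \<longlonglongrightarrow> w n * L n * of_real (q ^ n)" for n
    by (intro tendsto_intros assms(3))
  ultimately show ?thesis
    using tannerys_theorem[of "\<lambda>n k. w n * T n k * of_real (q ^ n)"] by simp
qed

lemma norm_prod_le_exp: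
  assumes "0 \<le> B" "0 \<le> s" "\<And>j. j < k \<Longrightarrow> norm (f j) \<le> B * (1 + s * q ^ j)"
  shows "norm (\<Prod>j<k. f j :: complex) \<le> B ^ k * exp (s / (1 - q))"
proof -
  have "norm (\<Prod>j<k. f j) \<le> (\<Prod>j<k. B * exp (s * q ^ j))"
    unfolding prod_norm[symmetric]
  proof (rule prod_mono)
    fix j assume "j \<in> {..<k}"
    have "B * (1 + s * q ^ j) \<le> B * exp (s * q ^ j)"
      using assms(1) exp_ge_add_one_self by (rule mult_left_mono[rotated])
    then show "0 \<le> norm (f j) \<and> norm (f j) \<le> B * exp (s * q ^ j)"
      using assms(3)[of j] \<open>j \<in> {..<k}\<close> by simp
  qed
  also have "\<dots> = B ^ k * exp (s * (\<Sum>j<k. q ^ j))"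
    by (simp add: prod.distrib exp_sum sum_distrib_left)
  also have "\<dots> \<le> B ^ k * exp (s / (1 - q))"
  proof -
    have "(\<Sum>j<k. q ^ j) \<le> 1 / (1 - q)"
      using q_pos q_less_1 by (simp add: sum_gp_strict divide_right_mono)
    then have "s * (\<Sum>j<k. q ^ j) \<le> s / (1 - q)"
      using mult_left_mono[OF _ assms(2)] by fastforce
    then show ?thesis
      using assms(1) by (simp add: mult_left_mono)
  qed
  finally show ?thesis .
qed

lemma norm_prod_lattice_le:
  fixes \<rho> :: complex
  shows "norm (\<Prod>j<k. of_real (q ^ n) - \<rho> * of_real (q ^ j)) \<le> exp (norm \<rho> / (1 - q))"
proof -
  have "norm (of_real (q ^ n) - \<rho> * of_real (q ^ j)) \<le> 1 * (1 + norm \<rho> * q ^ j)" for j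
  proof -
    have "q ^ n \<le> 1"
      using q_pos q_less_1 by (simp add: power_le_one)
    then show ?thesis
      using norm_triangle_ineq4[of "of_real (q ^ n)" "\<rho> * of_real (q ^ j)"] q_pos
      by (simp add: norm_mult norm_power)
  qed
  then show ?thesis
    using norm_prod_le_exp[of 1 "norm \<rho>" k] by simp
qed

lemma tendsto_prod_lattice_0:
  fixes \<rho> :: complex
  assumes "n \<noteq> 0"
  shows "(\<lambda>k. \<Prod>j<k. of_real (q ^ n) - \<rho> * of_real (q ^ j)) \<longlonglongrightarrow> 0"
proof (rule Lim_null_comparison)
  define C where "C = exp (norm \<rho> / q / (1 - q))"
  have "norm (of_real (q ^ n) - \<rho> * of_real (q ^ j)) \<le> q * (1 + norm \<rho> / q * q ^ j)" for j
  proof -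
    have "q ^ n \<le> q"
      using power_decreasing[of 1 n q] assms q_pos q_less_1 by simp
    then show ?thesis
      using norm_triangle_ineq4[of "of_real (q ^ n)" "\<rho> * of_real (q ^ j)"] q_pos
      by (simp add: norm_mult norm_power algebra_simps)
  qed
  then show "\<forall>\<^sub>F k in sequentially. norm (\<Prod>j<k. of_real (q ^ n) - \<rho> * of_real (q ^ j)) \<le> q ^ k * C"
    using norm_prod_le_exp[of q "norm \<rho> / q"] q_pos unfolding C_def by simp
  show "(\<lambda>k. q ^ k * C) \<longlonglongrightarrow> 0"
    using q_pos q_less_1 by (intro tendsto_mult_left_zero LIMSEQ_power_zero) auto
qed

lemma norm_prod_lattice_diff_le:
  fixes \<rho> :: complex
  shows "norm (\<Prod>j<k. \<rho> * of_real (q ^ n) - \<rho> * of_real (q ^ j)) \<le> exp (norm \<rho> / (1 - q))"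
proof (cases "n < k")
  case True
  then have zero: "(\<Prod>j<k. \<rho> * of_real (q ^ n) - \<rho> * of_real (q ^ j)) = 0"
    by (intro prod_zero bexI[of _ n]) auto
  show ?thesis
    unfolding zero by simp
next
  case False
  have "norm (\<rho> * of_real (q ^ n) - \<rho> * of_real (q ^ j)) \<le> 1 * (1 + norm \<rho> * q ^ j)"
    if "j < k" for j
  proof -
    have "\<bar>q ^ n - q ^ j\<bar> \<le> q ^ j"
      using that False q_pos q_less_1 by (simp add: power_decreasing)
    then have "norm \<rho> * \<bar>q ^ n - q ^ j\<bar> \<le> norm \<rho> * q ^ j"
      by (rule mult_left_mono) simp
    moreover have "norm (\<rho> * of_real (q ^ n) - \<rho> * of_real (q ^ j)) = norm \<rho> * \<bar>q ^ n - q ^ j\<bar>"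
      by (simp add: norm_mult del: of_real_power flip: right_diff_distrib of_real_diff)
    ultimately show ?thesis by simp
  qed
  then show ?thesis
    using norm_prod_le_exp[of 1 "norm \<rho>" k] by simp
qed

lemma prod_lattice_diff_eventually_0:
  fixes \<rho> :: complex
  shows "\<forall>\<^sub>F k in sequentially. (\<Prod>j<k. \<rho> * of_real (q ^ n) - \<rho> * of_real (q ^ j)) = 0"
  unfolding eventually_sequentially
  by (intro exI[of _ "Suc n"] allI impI prod_zero bexI[of _ n]) auto

end

section \<open>The Andrews--Askey integral\<close>

locale andrews_askey = q_base +
  fixes a b c d :: complex
  assumes c_nonzero: "c \<noteq> 0" and d_nonzero: "d \<noteq> 0"
    and ac_small: "norm (a * c) < 1" and ad_small: "norm (a * d) < 1"
    and bc_small: "norm (b * c) < 1" and bd_small: "norm (b * d) < 1"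
begin

definition weight :: "complex \<Rightarrow> complex" where
  "weight t = qpoch_inf (of_real q * t / c) q * qpoch_inf (of_real q * t / d) q
              / (qpoch_inf (a * t) q * qpoch_inf (b * t) q)"

definition cprod :: "nat \<Rightarrow> complex \<Rightarrow> complex" where
  "cprod k t = (\<Prod>j<k. t - c * of_real (q ^ j))"

definition moment :: "nat \<Rightarrow> complex" where
  "moment k = jackson (\<lambda>t. weight t * cprod k t) q c d"

text \<open>Up to the factors \<open>1 - t/c\<close> and \<open>1 - t/d\<close>, which make it vanish at both endpoints,
  this is \<open>weight t * cprod k (q t)\<close>; its \<open>q\<close>-derivative is a combination of
  \<open>weight t * cprod (k + 1) t\<close> and \<open>weight t * cprod k t\<close>.\<close>
definition primitive :: "nat \<Rightarrow> complex \<Rightarrow> complex" where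
  "primitive k t = qpoch_inf (t / c) q * qpoch_inf (t / d) q
                   / (qpoch_inf (a * t) q * qpoch_inf (b * t) q)
                   * (\<Prod>j<k. t - c * of_real (q ^ Suc j))"

lemma lattice_norm_lt_1:
  assumes "x = c \<or> x = d" "e = a \<or> e = b"
  shows "norm (e * (x * of_real (q ^ n))) < 1"
proof -
  have "norm (e * (x * of_real (q ^ n))) = norm (e * x) * q ^ n"
    using q_pos by (simp add: norm_mult norm_power)
  also have "\<dots> \<le> norm (e * x)"
    using q_pos q_less_1 by (simp add: mult_left_le power_le_one)
  also have "\<dots> < 1"
    using assms ac_small ad_small bc_small bd_small by auto
  finally show ?thesis .
qed

lemma abcd_small: "norm (a * b * c * d) < 1"
proof -
  have "norm (a * b * c * d) = norm (a * c) * norm (b * d)"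
    by (simp add: norm_mult mult_ac)
  also have "\<dots> \<le> norm (a * c)"
    using bd_small by (simp add: mult_left_le)
  also have "\<dots> < 1"
    by (rule ac_small)
  finally show ?thesis .
qed

lemma tendsto_weight: "(\<lambda>n. weight (x * of_real (q ^ n))) \<longlonglongrightarrow> 1"
proof -
  have "(\<lambda>n. weight (x * of_real (q ^ n))) \<longlonglongrightarrow> 1 * 1 / (1 * 1)"
    unfolding weight_def
    by (intro tendsto_intros tendsto_qpoch_inf_1'[where y = "of_real q * x / c"]
          tendsto_qpoch_inf_1'[where y = "of_real q * x / d"]
          tendsto_qpoch_inf_1'[where y = "a * x"] tendsto_qpoch_inf_1'[where y = "b * x"]) auto
  then show ?thesis by simp
qed

lemma tendsto_cprod: "(\<lambda>n. cprod k (x * of_real (q ^ n))) \<longlonglongrightarrow> cprod k 0"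
proof -
  have "(\<lambda>n. x * of_real (q ^ n)) \<longlonglongrightarrow> 0"
    by (rule tendsto_lattice_0)
  then show ?thesis
    unfolding cprod_def by (intro tendsto_intros)
qed

lemma summable_weight_cprod:
  "summable (\<lambda>n. weight (x * of_real (q ^ n)) * cprod k (x * of_real (q ^ n)) * of_real (q ^ n))"
  using tendsto_mult[OF tendsto_weight tendsto_cprod]
  by (intro summable_convergent_mult_power) (auto simp: convergent_def)

lemma cprod_Suc: "cprod (Suc k) t = cprod k t * (t - c * of_real (q ^ k))"
  by (simp add: cprod_def)

lemma cprod_Suc': "cprod (Suc k) t = (t - c) * (\<Prod>j<k. t - c * of_real (q ^ Suc j))"
  unfolding cprod_def by (subst prod.lessThan_Suc_shift) simp

lemma prod_shift_q: "(\<Prod>j<k. of_real q * t - c * of_real (q ^ Suc j)) = of_real q ^ k * cprod k t"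
proof -
  have "(\<Prod>j<k. of_real q * t - c * of_real (q ^ Suc j))
      = (\<Prod>j<k. of_real q * (t - c * of_real (q ^ j)))"
    by (simp add: algebra_simps)
  then show ?thesis
    by (simp add: prod.distrib cprod_def)
qed

lemma primitive_q_difference:
  assumes "x = c \<or> x = d" "t = x * of_real (q ^ n)"
  shows "(primitive k t - primitive k (of_real q * t)) / t
       = (1 - a * b * c * d * of_real (q ^ k)) / (c * d) * (weight t * cprod (Suc k) t)
         - (1 - a * c * of_real (q ^ k)) * (1 - b * c * of_real (q ^ k)) / c
           * (weight t * cprod k t)"
proof -
  have small: "norm (a * t) < 1" "norm (b * t) < 1"
    using lattice_norm_lt_1[OF assms(1)] assms(2) by auto
  then have nz: "qpoch_inf (a * t) q \<noteq> 0" "qpoch_inf (b * t) q \<noteq> 0" "1 - a * t \<noteq> 0" "1 - b * t \<noteq> 0"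
    by (auto simp: qpoch_inf_nonzero_if_small)
  have "t \<noteq> 0"
    using assms c_nonzero d_nonzero q_pos by auto
  have unfold_c: "qpoch_inf (t / c) q = (1 - t / c) * qpoch_inf (of_real q * t / c) q"
    and unfold_d: "qpoch_inf (t / d) q = (1 - t / d) * qpoch_inf (of_real q * t / d) q"
    by (subst qpoch_inf_unfold; simp add: mult.commute)+
  have unfold_a: "qpoch_inf (a * (of_real q * t)) q = qpoch_inf (a * t) q / (1 - a * t)"
    and unfold_b: "qpoch_inf (b * (of_real q * t)) q = qpoch_inf (b * t) q / (1 - b * t)"
    using qpoch_inf_unfold[of "a * t"] qpoch_inf_unfold[of "b * t"] nz
    by (simp_all add: field_simps mult_ac)
  have primitive_t: "primitive k t = - weight t * (1 - t / d) * cprod (Suc k) t / c"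
    unfolding primitive_def weight_def unfold_c unfold_d cprod_Suc'
    using nz c_nonzero d_nonzero by (simp add: field_simps)
  have primitive_qt:
    "primitive k (of_real q * t) = weight t * (1 - a * t) * (1 - b * t) * of_real q ^ k * cprod k t"
    unfolding primitive_def weight_def unfold_a unfold_b prod_shift_q
    using nz c_nonzero d_nonzero by (simp add: field_simps)
  show ?thesis
    unfolding primitive_t primitive_qt cprod_Suc using \<open>t \<noteq> 0\<close> c_nonzero d_nonzero
    by (simp add: field_simps)
qed

lemma primitive_endpoints: "primitive k c = 0" "primitive k d = 0"
  using c_nonzero d_nonzero by (simp_all add: primitive_def)

lemma tendsto_primitive: "(\<lambda>n. primitive k (x * of_real (q ^ n))) \<longlonglongrightarrow> primitive k 0"
proof -
  have div: "(\<lambda>n. qpoch_inf (x * of_real (q ^ n) / e) q) \<longlonglongrightarrow> 1" for e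
    by (rule tendsto_qpoch_inf_1'[where y = "x / e"]) simp
  have mult: "(\<lambda>n. qpoch_inf (e * (x * of_real (q ^ n))) q) \<longlonglongrightarrow> 1" for e
    by (rule tendsto_qpoch_inf_1'[where y = "e * x"]) simp
  have "(\<lambda>n. \<Prod>j<k. x * of_real (q ^ n) - c * of_real (q ^ Suc j))
      \<longlonglongrightarrow> (\<Prod>j<k. 0 - c * of_real (q ^ Suc j))"
    by (intro tendsto_intros tendsto_lattice_0)
  then have "(\<lambda>n. primitive k (x * of_real (q ^ n)))
      \<longlonglongrightarrow> 1 * 1 / (1 * 1) * (\<Prod>j<k. 0 - c * of_real (q ^ Suc j))"
    unfolding primitive_def by (intro tendsto_mult tendsto_divide div mult) simp_all
  then show ?thesis
    by (simp add: primitive_def)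
qed

lemma jackson0_moment_recurrence:
  assumes "x = c \<or> x = d"
  shows "(1 - a * b * c * d * of_real (q ^ k)) / (c * d)
           * jackson0 (\<lambda>t. weight t * cprod (Suc k) t) q x
         - (1 - a * c * of_real (q ^ k)) * (1 - b * c * of_real (q ^ k)) / c
           * jackson0 (\<lambda>t. weight t * cprod k t) q x
       = - of_real (1 - q) * primitive k 0"
proof -
  define A where "A = (1 - a * b * c * d * of_real (q ^ k)) / (c * d)"
  define B where "B = (1 - a * c * of_real (q ^ k)) * (1 - b * c * of_real (q ^ k)) / c"
  have "A * jackson0 (\<lambda>t. weight t * cprod (Suc k) t) q x
        - B * jackson0 (\<lambda>t. weight t * cprod k t) q x
      = jackson0 (\<lambda>t. A * (weight t * cprod (Suc k) t) - B * (weight t * cprod k t)) q x"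
    using summable_weight_cprod
    by (simp add: jackson0_diff jackson0_cmult summable_mult mult.assoc)
  also have "\<dots> = jackson0 (\<lambda>t. (primitive k t - primitive k (of_real q * t)) / t) q x"
    by (rule jackson0_cong, subst primitive_q_difference[OF assms refl]) (simp add: A_def B_def)
  also have "\<dots> = of_real (1 - q) * (primitive k x - primitive k 0)"
    using assms c_nonzero d_nonzero q_pos by (intro jackson0_q_difference tendsto_primitive) auto
  finally show ?thesis
    using assms primitive_endpoints by (auto simp: A_def B_def algebra_simps)
qed

lemma moment_recurrence:
  "(1 - a * b * c * d * of_real (q ^ k)) * moment (Suc k)
   = d * (1 - a * c * of_real (q ^ k)) * (1 - b * c * of_real (q ^ k)) * moment k"
proof -
  define A where "A = (1 - a * b * c * d * of_real (q ^ k)) / (c * d)"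
  define B where "B = (1 - a * c * of_real (q ^ k)) * (1 - b * c * of_real (q ^ k)) / c"
  define J where "J j x = jackson0 (\<lambda>t. weight t * cprod j t) q x" for j x
  have rec: "A * J (Suc k) x - B * J k x = - of_real (1 - q) * primitive k 0"
    if "x = c \<or> x = d" for x
    unfolding A_def B_def J_def by (rule jackson0_moment_recurrence[OF that])
  have "A * (J (Suc k) d - J (Suc k) c) - B * (J k d - J k c)
      = (A * J (Suc k) d - B * J k d) - (A * J (Suc k) c - B * J k c)"
    by (simp add: algebra_simps)
  also have "\<dots> = 0"
    using rec[of c] rec[of d] by simp
  finally have "A * moment (Suc k) - B * moment k = 0"
    by (simp add: moment_def jackson_def J_def)
  moreover have "(1 - a * b * c * d * of_real (q ^ k)) * moment (Suc k)
      - d * (1 - a * c * of_real (q ^ k)) * (1 - b * c * of_real (q ^ k)) * moment k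
      = c * d * (A * moment (Suc k) - B * moment k)"
    using c_nonzero d_nonzero by (simp add: A_def B_def field_simps)
  ultimately show ?thesis
    by simp
qed

lemma moment_eq:
  "moment k = moment 0 * d ^ k * qpoch (a * c) q k * qpoch (b * c) q k / qpoch (a * b * c * d) q k"
proof (induction k)
  case (Suc k)
  have "1 - a * b * c * d * of_real (q ^ k) \<noteq> 0" "qpoch (a * b * c * d) q k \<noteq> 0"
    using mult_power_neq_1[OF abcd_small] qpoch_nonzero_if_small[OF abcd_small] by auto
  with Suc show ?case
    using moment_recurrence[of k] by (simp add: qpoch_Suc field_simps)
qed simp

lemma cprod_div_power: "cprod k t / d ^ k = (\<Prod>j<k. t / d - c / d * of_real (q ^ j))"
  by (induction k) (simp_all add: cprod_def d_nonzero field_simps)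

lemma jackson0_div_power:
  "jackson0 (\<lambda>t. weight t * cprod k t) q x / d ^ k
   = x * of_real (1 - q) * (\<Sum>n. weight (x * of_real (q ^ n))
       * (\<Prod>j<k. x * of_real (q ^ n) / d - c / d * of_real (q ^ j)) * of_real (q ^ n))"
proof -
  have "jackson0 (\<lambda>t. weight t * cprod k t) q x / d ^ k
      = x * of_real (1 - q) * ((\<Sum>n. weight (x * of_real (q ^ n)) * cprod k (x * of_real (q ^ n))
          * of_real (q ^ n)) / d ^ k)"
    by (simp add: jackson0_def)
  also have "\<dots> = x * of_real (1 - q) * (\<Sum>n. weight (x * of_real (q ^ n))
          * cprod k (x * of_real (q ^ n))
          * of_real (q ^ n) / d ^ k)"
    by (simp only: suminf_divide[OF summable_weight_cprod])
  also have "\<dots> = x * of_real (1 - q) * (\<Sum>n. weight (x * of_real (q ^ n))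
       * (\<Prod>j<k. x * of_real (q ^ n) / d - c / d * of_real (q ^ j)) * of_real (q ^ n))"
    by (intro arg_cong[where f = "\<lambda>s. x * of_real (1 - q) * s"] suminf_cong)
      (unfold cprod_div_power[symmetric], simp)
  finally show ?thesis .
qed

lemma tendsto_moment_div_power:
  "(\<lambda>k. moment k / d ^ k) \<longlonglongrightarrow> d * of_real (1 - q) * weight d * qpoch_inf (c / d) q"
proof -
  define S where "S x k = (\<Sum>n. weight (x * of_real (q ^ n))
       * (\<Prod>j<k. x * of_real (q ^ n) / d - c / d * of_real (q ^ j)) * of_real (q ^ n))" for x k
  have bounded_weight: "Bseq (\<lambda>n. weight (x * of_real (q ^ n)))" for x
    using tendsto_weight convergent_def convergent_imp_Bseq by blast
  define L :: "nat \<Rightarrow> complex" where "L n = (if n = 0 then qpoch_inf (c / d) q else 0)" for n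
  have lim_prod: "(\<lambda>k. \<Prod>j<k. of_real (q ^ n) - c / d * of_real (q ^ j)) \<longlonglongrightarrow> L n" for n
  proof (cases "n = 0")
    case True
    then show ?thesis
      using LIMSEQ_qpoch[of "c / d"] by (simp add: L_def qpoch_def)
  next
    case False
    then show ?thesis
      using tendsto_prod_lattice_0[of n "c / d"] by (simp add: L_def)
  qed
  have "S d = (\<lambda>k. \<Sum>n. weight (d * of_real (q ^ n))
       * (\<Prod>j<k. of_real (q ^ n) - c / d * of_real (q ^ j)) * of_real (q ^ n))"
    using d_nonzero by (simp add: S_def fun_eq_iff)
  then have "S d \<longlonglongrightarrow> (\<Sum>n. weight (d * of_real (q ^ n)) * L n * of_real (q ^ n))"
    using tannery_geometric[OF bounded_weight norm_prod_lattice_le lim_prod] by simp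
  also have "(\<Sum>n. weight (d * of_real (q ^ n)) * L n * of_real (q ^ n))
      = weight d * qpoch_inf (c / d) q"
    by (subst suminf_finite[of "{0}"]) (auto simp: L_def)
  finally have lim_d: "S d \<longlonglongrightarrow> weight d * qpoch_inf (c / d) q" .
  have "S c = (\<lambda>k. \<Sum>n. weight (c * of_real (q ^ n))
       * (\<Prod>j<k. c / d * of_real (q ^ n) - c / d * of_real (q ^ j)) * of_real (q ^ n))"
    by (simp add: S_def fun_eq_iff)
  moreover have "(\<lambda>k. \<Sum>n. weight (c * of_real (q ^ n))
       * (\<Prod>j<k. c / d * of_real (q ^ n) - c / d * of_real (q ^ j)) * of_real (q ^ n))
      \<longlonglongrightarrow> (\<Sum>n. weight (c * of_real (q ^ n)) * 0 * of_real (q ^ n))"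
    by (intro tannery_geometric[OF bounded_weight norm_prod_lattice_diff_le]
        tendsto_eventually prod_lattice_diff_eventually_0)
  ultimately have lim_c: "S c \<longlonglongrightarrow> 0"
    by simp
  have "moment k / d ^ k = d * of_real (1 - q) * S d k - c * of_real (1 - q) * S c k" for k
    unfolding moment_def jackson_def diff_divide_distrib jackson0_div_power S_def ..
  moreover have "(\<lambda>k. d * of_real (1 - q) * S d k - c * of_real (1 - q) * S c k)
      \<longlonglongrightarrow> d * of_real (1 - q) * (weight d * qpoch_inf (c / d) q) - c * of_real (1 - q) * 0"
    by (intro tendsto_intros lim_c lim_d)
  ultimately show ?thesis
    by (simp add: mult_ac)
qed

lemma andrews_askey_integral:
  "moment 0 = d * of_real (1 - q) * qpoch_inf (of_real q) q * qpoch_inf (d * of_real q / c) q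
      * qpoch_inf (c / d) q * qpoch_inf (a * b * c * d) q
    / (qpoch_inf (a * c) q * qpoch_inf (a * d) q * qpoch_inf (b * c) q * qpoch_inf (b * d) q)"
proof -
  have nonzero: "qpoch_inf (a * b * c * d) q \<noteq> 0" "qpoch_inf (a * c) q \<noteq> 0"
      "qpoch_inf (a * d) q \<noteq> 0" "qpoch_inf (b * c) q \<noteq> 0" "qpoch_inf (b * d) q \<noteq> 0"
    using abcd_small ac_small ad_small bc_small bd_small
    by (simp_all add: qpoch_inf_nonzero_if_small)
  have "moment k / d ^ k
      = moment 0 * qpoch (a * c) q k * qpoch (b * c) q k / qpoch (a * b * c * d) q k" for k
    using d_nonzero by (subst moment_eq) (simp add: field_simps)
  then have "(\<lambda>k. moment k / d ^ k)
      \<longlonglongrightarrow> moment 0 * qpoch_inf (a * c) q * qpoch_inf (b * c) q / qpoch_inf (a * b * c * d) q"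
    using nonzero by (simp only:) (intro tendsto_intros LIMSEQ_qpoch)
  with tendsto_moment_div_power
  have "moment 0 * qpoch_inf (a * c) q * qpoch_inf (b * c) q / qpoch_inf (a * b * c * d) q
      = d * of_real (1 - q) * weight d * qpoch_inf (c / d) q"
    by (rule LIMSEQ_unique[rotated])
  moreover have "weight d = qpoch_inf (of_real q) q * qpoch_inf (d * of_real q / c) q
      / (qpoch_inf (a * d) q * qpoch_inf (b * d) q)"
    using d_nonzero by (simp add: weight_def mult.commute)
  ultimately show ?thesis
    using nonzero by (simp add: field_simps)
qed

lemma jackson_weight_terminating_series:
  assumes "\<And>k. M < k \<Longrightarrow> e k = 0"
  shows "jackson (\<lambda>t. weight t * (\<Sum>k. e k * (qpoch (c / t) q k * t ^ k))) q c d
       = moment 0 * (\<Sum>k\<le>M. e k * d ^ k * qpoch (a * c) q k * qpoch (b * c) q k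
                                 / qpoch (a * b * c * d) q k)"
proof -
  have series: "(\<Sum>k. e k * (qpoch (c / t) q k * t ^ k)) = (\<Sum>k\<le>M. e k * cprod k t)"
    if "t \<noteq> 0" for t
    using assms
    by (subst suminf_finite[of "{..M}"]) (auto simp: qpoch_div_mult_power[OF that] cprod_def)
  have "jackson0 (\<lambda>t. weight t * (\<Sum>k. e k * (qpoch (c / t) q k * t ^ k))) q x
      = (\<Sum>k\<le>M. e k * jackson0 (\<lambda>t. weight t * cprod k t) q x)" if "x \<noteq> 0" for x
  proof -
    have "jackson0 (\<lambda>t. weight t * (\<Sum>k. e k * (qpoch (c / t) q k * t ^ k))) q x
        = jackson0 (\<lambda>t. \<Sum>k\<le>M. e k * (weight t * cprod k t)) q x"
      by (intro jackson0_cong, subst series)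
        (use that q_pos in \<open>simp_all add: sum_distrib_left mult_ac\<close>)
    also have "\<dots> = (\<Sum>k\<le>M. jackson0 (\<lambda>t. e k * (weight t * cprod k t)) q x)"
      using summable_weight_cprod[simplified mult.assoc]
      by (intro jackson0_sum) (simp add: summable_mult mult.assoc)
    also have "\<dots> = (\<Sum>k\<le>M. e k * jackson0 (\<lambda>t. weight t * cprod k t) q x)"
      by (intro sum.cong refl jackson0_cmult summable_weight_cprod)
    finally show ?thesis .
  qed
  then have "jackson (\<lambda>t. weight t * (\<Sum>k. e k * (qpoch (c / t) q k * t ^ k))) q c d
      = (\<Sum>k\<le>M. e k * moment k)"
    using c_nonzero d_nonzero
    by (simp add: jackson_def moment_def right_diff_distrib sum_subtractf)
  also have "\<dots> = moment 0 * (\<Sum>k\<le>M. e k * d ^ k * qpoch (a * c) q k * qpoch (b * c) q k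
                                      / qpoch (a * b * c * d) q k)"
    by (subst moment_eq) (simp add: sum_distrib_left mult_ac)
  finally show ?thesis .
qed

end

theorem theorem6:
  fixes q :: real and M :: nat and a b c d f g v w r :: complex
  assumes "0 < q" "q < 1"
    and "r = of_real (q powi (- int M))"
    and "b \<noteq> 0" "c \<noteq> 0" "d \<noteq> 0"
    and "cmod (a * c) < 1" "cmod (a * d) < 1" "cmod (b * c) < 1" "cmod (b * d) < 1"
    and "cmod (of_real q / (b * c)) < 1"
    and "\<forall>n::nat. v * of_real (q ^ n) \<noteq> 1" "\<forall>n::nat. w * of_real (q ^ n) \<noteq> 1"
  shows "jackson (\<lambda>t.
            qpoch_inf (of_real q * t / c) q * qpoch_inf (of_real q * t / d) q
            / (qpoch_inf (a * t) q * qpoch_inf (b * t) q)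
            * (\<Sum>k. qpoch r q k * qpoch f q k * qpoch g q k * qpoch (c / t) q k
                     * qpoch (a * b * c * d) q k * (of_real q * t / (b * c * d)) ^ k
                   / (qpoch v q k * qpoch w q k * qpoch (a * c) q k * qpoch (of_real q) q k)
                   * phi32 (r * of_real (q ^ k)) (f * of_real (q ^ k)) (g * of_real (q ^ k))
                           (v * of_real (q ^ k)) (w * of_real (q ^ k)) q (of_real q)))
           q c d
       = d * of_real (1 - q) * qpoch_inf (of_real q) q * qpoch_inf (d * of_real q / c) q
           * qpoch_inf (c / d) q * qpoch_inf (a * b * c * d) q
         / (qpoch_inf (a * c) q * qpoch_inf (a * d) q * qpoch_inf (b * c) q * qpoch_inf (b * d) q)
         * phi32 r f g v w q (of_real q / (b * c))"
proof -
  interpret andrews_askey q a b c d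
    using assms by unfold_locales auto
  \<comment> \<open>All series terminate since \<open>r q\<^sup>M = 1\<close>.\<close>
  have r_qM: "r * of_real (q ^ M) = 1"
    using assms(1,3) mult_power_int_neg_eq_1 by simp
  define \<Phi> where "\<Phi> k = phi32 (r * of_real (q ^ k)) (f * of_real (q ^ k)) (g * of_real (q ^ k))
                           (v * of_real (q ^ k)) (w * of_real (q ^ k)) q (of_real q)" for k
  define e where "e k = qpoch r q k * qpoch f q k * qpoch g q k * qpoch (a * b * c * d) q k
      * (of_real q / (b * c * d)) ^ k / (qpoch v q k * qpoch w q k * qpoch (a * c) q k * qfac k)
      * \<Phi> k"
    for k
  have "M < k \<Longrightarrow> e k = 0" for k
    using qpoch_terminating[OF r_qM, of 0] by (simp add: e_def)
  then have "jackson (\<lambda>t. weight t * (\<Sum>k. e k * (qpoch (c / t) q k * t ^ k))) q c d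
      = moment 0 * (\<Sum>k\<le>M. e k * d ^ k * qpoch (a * c) q k * qpoch (b * c) q k
                                / qpoch (a * b * c * d) q k)"
    by (rule jackson_weight_terminating_series)
  also have "\<dots> = moment 0 * (\<Sum>k\<le>M. qpoch r q k * qpoch f q k * qpoch g q k * qpoch (b * c) q k
      * (of_real q / (b * c)) ^ k / (qpoch v q k * qpoch w q k * qfac k) * \<Phi> k)"
    using assms(4-6) qpoch_nonzero_if_small[OF ac_small] qpoch_nonzero_if_small[OF abcd_small]
    by (intro arg_cong[where f = "(*) (moment 0)"] sum.cong refl)
      (simp add: e_def field_simps power_mult_distrib)
  also have "\<dots> = moment 0 * phi32 r f g v w q (of_real q / (b * c))"
    unfolding \<Phi>_def using assms(4,5) by (subst phi32_expansion[OF r_qM]) simp_all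
  finally show ?thesis
    unfolding andrews_askey_integral
    by (simp add: weight_def e_def \<Phi>_def power_mult_distrib power_divide mult_ac)
qed

end
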